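(* Fix a slot $t$ and arbitrary values $W(t)\in[0,W_{max}]$, $S(t)\in\mathcal{S}$ and $X(t)\in\mathbb{R}$, and a parameter $V>0$. Consider problem P3 for this slot, with decision variable $P\in[P_{low},P_{high}]$, where $P_{low}=\max[0,W(t)-D_{max}]$, $P_{high}=\min[P_{peak},W(t)+R_{max}]$, and the induced $R=\max(P-W(t),0)$, $D=\max(W(t)-P,0)$. Then every optimal solution $P^*(t)$ of P3 (with induced $R^*(t),D^*(t)$) satisfies: (1) if $X(t)>-V C_{min}$, then $R^*(t)=0$ (i.e. $P^*(t)\le W(t)$); (2) if $X(t)<-V\chi_{min}$, then $D^*(t)=0$ (i.e. $P^*(t)\ge W(t)$).
   Context: Basic model. Time is slotted, $t=0,1,2,\dots$. In slot $t$ the workload (in units of power) is $W(t)\in[0,W_{max}]$. A controller chooses the grid power $P(t)$, the battery recharge amount $R(t)$ and the battery discharge amount $D(t)$ subject to: $W(t)=P(t)-R(t)+D(t)$; $R(t)>0\Rightarrow D(t)=0$ and $D(t)>0\Rightarrow R(t)=0$; $0\le R(t)\le R_{max}$, $0\le D(t)\le D_{max}$; $0\le P(t)\le P_{peak}$, where $P_{peak}\ge W_{max}$. An auxiliary state $S(t)$ takes values in a finite set $\mathcal{S}$. The per-unit price is $C(t)=\hat C(S(t),P(t))$, where for each $s\in\mathcal{S}$ the map $P\mapsto\hat C(s,P)$ is non-negative, finite and non-decreasing on $[0,P_{peak}]$ (not necessarily continuous or convex). $C_{min}$ and $C_{max}$ denote the minimum and maximum of $\hat C(s,P)$ over $s\in\mathcal{S}$,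 $P\in[0,P_{peak}]$. Constants $C_{rc}\ge0$, $C_{dc}\ge0$ are the fixed costs of a recharge and a discharge operation. Indicators: $1_R(t)=1$ if $R(t)>0$ and $0$ otherwise; $1_D(t)=1$ if $D(t)>0$ and $0$ otherwise. The constant $\chi_{min}>0$ is such that for all $P_1\le P_2$ in $[0,P_{peak}]$, all $\chi\ge\chi_{min}$ and all $s\in\mathcal{S}$: $P_1(-\chi+\hat C(s,P_1))\ge P_2(-\chi+\hat C(s,P_2))$; it is assumed that $\chi_{min}>C_{min}$. Problem P3 (for slot $t$, given $W(t),S(t),X(t)$ and $V>0$): minimize $X(t)P+V\big[P\,\hat C(S(t),P)+1_R C_{rc}+1_D C_{dc}\big]$ over $P\in[P_{low},P_{high}]$, where $R=\max(P-W(t),0)$, $D=\max(W(t)-P,0)$, $1_R=1$ iff $P>W(t)$, $1_D=1$ iff $P<W(t)$. *)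

theory Defs
  imports Main "HOL-Library.Multiset" Complex_Main
begin

definition ind :: "real \<Rightarrow> real" where
  "ind x = (if x > 0 then 1 else 0)"

definition recharge :: "real \<Rightarrow> real \<Rightarrow> real" where
  "recharge W P = max (P - W) 0"

definition discharge :: "real \<Rightarrow> real \<Rightarrow> real" where
  "discharge W P = max (W - P) 0"

definition P3_obj :: "('s \<Rightarrow> real \<Rightarrow> real) \<Rightarrow> real \<Rightarrow> real \<Rightarrow> real \<Rightarrow> real
    \<Rightarrow> 's \<Rightarrow> real \<Rightarrow> real \<Rightarrow> real" where
  "P3_obj Chat Crc Cdc V W s X P =
     X * P + V * (P * Chat s P + ind (recharge W P) * Crc + ind (discharge W P) * Cdc)"

definition P_low :: "real \<Rightarrow> real \<Rightarrow> real" where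
  "P_low Dmax W = max 0 (W - Dmax)"

definition P_high :: "real \<Rightarrow> real \<Rightarrow> real \<Rightarrow> real" where
  "P_high Ppeak Rmax W = min Ppeak (W + Rmax)"

definition P3_optimal :: "('s \<Rightarrow> real \<Rightarrow> real) \<Rightarrow> real \<Rightarrow> real \<Rightarrow> real \<Rightarrow> real \<Rightarrow> real
    \<Rightarrow> real \<Rightarrow> real \<Rightarrow> 's \<Rightarrow> real \<Rightarrow> real \<Rightarrow> bool" where
  "P3_optimal Chat Crc Cdc Ppeak Rmax Dmax V W s X P \<longleftrightarrow>
     P \<in> {P_low Dmax W .. P_high Ppeak Rmax W} \<and>
     (\<forall>Q \<in> {P_low Dmax W .. P_high Ppeak Rmax W}.
        P3_obj Chat Crc Cdc V W s X P \<le> P3_obj Chat Crc Cdc V W s X Q)"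

end

theory Submission
  imports Defs
begin

(* Serving the workload entirely from the grid,
   P = W, is always feasible for P3 and uses the battery not at all, so its objective is
   X W + V W C(W).  Against this benchmark:
   - a recharging choice P > W costs X (P - W) + V (P C(P) - W C(W)) + V C_rc more;
     since C is non-decreasing, P C(P) - W C(W) >= (P - W) C_min, hence the extra cost is
     at least (P - W)(X + V C_min) > 0 whenever X > -V C_min;
   - a discharging choice P < W costs X (P - W) + V (P C(P) - W C(W)) + V C_dc more;
     the defining property of chi_min gives P C(P) - W C(W) >= chi_min (P - W), hence the
     extra cost is at least (P - W)(X + V chi_min) > 0 whenever X < -V chi_min.
   So in either regime every P on the wrong side of W is strictly worse than W and cannot be
   optimal. *)

lemma W_feasible:
  assumes "0 \<le> W" "W \<le> Ppeak" "Rmax \<ge> 0" "Dmax \<ge> 0"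
  shows "W \<in> {P_low Dmax W .. P_high Ppeak Rmax W}"
  using assms by (auto simp: P_low_def P_high_def)

lemma feasible_range:
  assumes "P \<in> {P_low Dmax W .. P_high Ppeak Rmax W}"
  shows "0 \<le> P" "P \<le> Ppeak"
  using assms by (auto simp: P_low_def P_high_def)

lemma P3_obj_idle:
  "P3_obj Chat Crc Cdc V W s X W = X * W + V * (W * Chat s W)"
  by (simp add: P3_obj_def ind_def recharge_def discharge_def)

lemma P3_obj_recharge:
  assumes "W < P"
  shows "P3_obj Chat Crc Cdc V W s X P = X * P + V * (P * Chat s P + Crc)"
  using assms by (simp add: P3_obj_def ind_def recharge_def discharge_def)

lemma P3_obj_discharge:
  assumes "P < W"
  shows "P3_obj Chat Crc Cdc V W s X P = X * P + V * (P * Chat s P + Cdc)"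
  using assms by (simp add: P3_obj_def ind_def recharge_def discharge_def)

lemma recharge_worse_than_idle:
  assumes WP: "W < P" and W0: "0 \<le> W"
    and mono: "Chat s W \<le> Chat s P" and lb: "Cmin \<le> Chat s W"
    and V: "V > 0" and Crc: "Crc \<ge> 0" and X: "X > - V * Cmin"
  shows "P3_obj Chat Crc Cdc V W s X W < P3_obj Chat Crc Cdc V W s X P"
proof -
  have "P * Chat s P - W * Chat s W \<ge> (P - W) * Cmin"
  proof -
    have "P * Chat s P \<ge> P * Chat s W" using mono WP W0 by (simp add: mult_left_mono)
    moreover have "(P - W) * Chat s W \<ge> (P - W) * Cmin" using lb WP by (simp add: mult_left_mono)
    ultimately show ?thesis by (simp add: algebra_simps)
  qed
  hence cost: "V * (P * Chat s P - W * Chat s W) \<ge> V * ((P - W) * Cmin)"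
    using V by (simp add: mult_left_mono)
  have gain: "(P - W) * (X + V * Cmin) > 0" using WP X by (intro mult_pos_pos) auto
  have "V * Crc \<ge> 0" using V Crc by simp
  with cost gain show ?thesis
    unfolding P3_obj_idle P3_obj_recharge[OF WP] by (simp add: algebra_simps)
qed

lemma discharge_worse_than_idle:
  assumes PW: "P < W"
    and chi: "P * (- chi + Chat s P) \<ge> W * (- chi + Chat s W)"
    and V: "V > 0" and Cdc: "Cdc \<ge> 0" and X: "X < - V * chi"
  shows "P3_obj Chat Crc Cdc V W s X W < P3_obj Chat Crc Cdc V W s X P"
proof -
  have "P * Chat s P - W * Chat s W \<ge> chi * (P - W)"
    using chi by (simp add: algebra_simps)
  hence cost: "V * (P * Chat s P - W * Chat s W) \<ge> V * (chi * (P - W))"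
    using V by (simp add: mult_left_mono)
  have gain: "(P - W) * (X + V * chi) > 0" using PW X by (simp add: mult_neg_neg)
  have "V * Cdc \<ge> 0" using V Cdc by simp
  with cost gain show ?thesis
    unfolding P3_obj_idle P3_obj_discharge[OF PW] by (simp add: algebra_simps)
qed

theorem lemma2:
  fixes Chat :: "'s \<Rightarrow> real \<Rightarrow> real" and SS :: "'s set"
    and Wmax Ppeak Rmax Dmax Crc Cdc Cmin chimin V W X Pstar :: real and s :: 's
  assumes SS_fin: "finite SS" and SS_ne: "SS \<noteq> {}"
    and Ppeak: "Ppeak \<ge> Wmax"
    and Rmax: "Rmax \<ge> 0" and Dmax: "Dmax \<ge> 0"
    and Crc: "Crc \<ge> 0" and Cdc: "Cdc \<ge> 0"
    and C_nonneg: "\<And>s' P. s' \<in> SS \<Longrightarrow> P \<in> {0..Ppeak} \<Longrightarrow> Chat s' P \<ge> 0"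
    and C_mono: "\<And>s' P1 P2. s' \<in> SS \<Longrightarrow> 0 \<le> P1 \<Longrightarrow> P1 \<le> P2 \<Longrightarrow> P2 \<le> Ppeak
                   \<Longrightarrow> Chat s' P1 \<le> Chat s' P2"
    and Cmin_lb: "\<And>s' P. s' \<in> SS \<Longrightarrow> P \<in> {0..Ppeak} \<Longrightarrow> Cmin \<le> Chat s' P"
    and Cmin_att: "\<exists>s'\<in>SS. \<exists>P\<in>{0..Ppeak}. Chat s' P = Cmin"
    and chimin_pos: "chimin > 0"
    and chimin_prop: "\<And>s' P1 P2 chi. s' \<in> SS \<Longrightarrow> 0 \<le> P1 \<Longrightarrow> P1 \<le> P2 \<Longrightarrow> P2 \<le> Ppeak
                   \<Longrightarrow> chi \<ge> chimin \<Longrightarrow> P1 * (- chi + Chat s' P1) \<ge> P2 * (- chi + Chat s' P2)"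
    and chimin_gt: "chimin > Cmin"
    and W: "W \<in> {0..Wmax}" and s: "s \<in> SS" and V: "V > 0"
    and opt: "P3_optimal Chat Crc Cdc Ppeak Rmax Dmax V W s X Pstar"
  shows "(X > - V * Cmin \<longrightarrow> recharge W Pstar = 0)
       \<and> (X < - V * chimin \<longrightarrow> discharge W Pstar = 0)"
proof -
  have W0: "0 \<le> W" "W \<le> Ppeak" using W Ppeak by auto
  have feasible: "Pstar \<in> {P_low Dmax W .. P_high Ppeak Rmax W}"
    and no_better: "\<not> P3_obj Chat Crc Cdc V W s X W < P3_obj Chat Crc Cdc V W s X Pstar"
    using opt W_feasible[OF W0 Rmax Dmax] unfolding P3_optimal_def by (auto simp: not_less)
  note P0 = feasible_range[OF feasible]
  show ?thesis
  proof (intro conjI impI)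
    assume X: "X > - V * Cmin"
    show "recharge W Pstar = 0"
    proof (rule ccontr)
      assume "recharge W Pstar \<noteq> 0"
      hence WP: "W < Pstar" by (auto simp: recharge_def)
      have mono: "Chat s W \<le> Chat s Pstar" using C_mono[OF s W0(1) _ P0(2)] WP by simp
      have lb: "Cmin \<le> Chat s W" using Cmin_lb[OF s] W0 by simp
      show False
        using no_better recharge_worse_than_idle[where Chat = Chat and s = s,
                                               OF WP W0(1) mono lb V Crc X]
        by blast
    qed
  next
    assume X: "X < - V * chimin"
    show "discharge W Pstar = 0"
    proof (rule ccontr)
      assume "discharge W Pstar \<noteq> 0"
      hence PW: "Pstar < W" by (auto simp: discharge_def)
      have chi: "Pstar * (- chimin + Chat s Pstar) \<ge> W * (- chimin + Chat s W)"
        using chimin_prop[OF s P0(1) _ W0(2)] PW by simp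
      show False
        using no_better discharge_worse_than_idle[where Chat = Chat and s = s,
                                                OF PW chi V Cdc X]
        by blast
    qed
  qed
qed

end
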